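(* Let $\pi\in[0,1)$, $\epsilon\in\left(0,\tfrac12\right]$, $g>0$, $\underline{\gamma}\in[0,1]$, let $q:[0,1]\to\mathbb{R}$ be Lebesgue integrable, and let $r(x)=\min\{\int_\rho q(z)\,\mathrm{d}z:\rho\subseteq[0,1]\text{ Lebesgue measurable},\ \lambda(\rho)=x\}$ for $x\in[0,1]$ (so $r(0)=0$). Let $$\Gamma^\star=\left\{h\in[0,1]:\ \frac{(1-\pi)(1-\epsilon)-\pi\epsilon g}{(1-\pi)\epsilon}\,h\ \ge\ r(\underline{\gamma}h)\right\}.$$ Suppose the principal's policy $\gamma^\star:[0,1]\to\{0,\underline{\gamma}\}$ punishes at rate $\underline{\gamma}$ exactly in the states where this is credible, i.e. $\gamma^\star(h)=\underline{\gamma}$ if $h\in\Gamma^\star$ and $\gamma^\star(h)=0$ otherwise. Then $\gamma^\star$ is a threshold rule: there exists $\tilde h\in[0,1]$ such that $\gamma^\star(h)=\underline{\gamma}$ for all $h\in[0,\tilde h)$, $\gamma^\star(h)=0$ for all $h\in(\tilde h,1]$, and $\gamma^\star(\tilde h)\in\{0,\underline{\gamma}\}$, where $\gamma^\star(\tilde h)=\underline{\gamma}$ is possible only if $\tilde h$ satisfies the defining inequality of $\Gamma^\star$.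
   Context: In the principal–agent model of technology adoption, $h\in[0,1]$ is the measure of agents with access to a new technology (good with probability $\pi$, yielding $1+g$ if good and $0$ if bad when used), $\epsilon$ is the error probability of the agents' research signal, $\underline{\gamma}$ is the minimal rate of firing failed agents that induces research effort, $q(z)$ is the cost of replacement worker $z$, and $r(x)$ the least cost of replacing a measure $x$ of workers. $\Gamma^\star$ is the set of states in which the principal finds it worthwhile (under commitment) to punish failures at rate $\underline{\gamma}$; the principal only ever uses punishment rates $0$ or $\underline{\gamma}$. *)

theory Defs
  imports "HOL-Analysis.Analysis"
begin

text \<open>Rendered as the infimum (the paper asserts the minimum is attained).\<close>
definition repl_cost :: "(real \<Rightarrow> real) \<Rightarrow> real \<Rightarrow> real" where
  "repl_cost q x = Inf {(LINT z:\<rho>|lborel. q z) | \<rho>.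
      \<rho> \<in> sets lborel \<and> \<rho> \<subseteq> {0..1} \<and> measure lborel \<rho> = x}"

definition Gamma_star :: "real \<Rightarrow> real \<Rightarrow> real \<Rightarrow> real \<Rightarrow> (real \<Rightarrow> real) \<Rightarrow> real set" where
  "Gamma_star \<pi> \<epsilon> g \<gamma> q = {h \<in> {0..1}.
      ((1 - \<pi>) * (1 - \<epsilon>) - \<pi> * \<epsilon> * g) / ((1 - \<pi>) * \<epsilon>) * h \<ge> repl_cost q (\<gamma> * h)}"

end

theory Submission
  imports Defs "HOL-Probability.Distribution_Functions"
begin

(* The replacement cost is star-shaped: r(t x) <= t r(x) for t in [0,1]. Indeed, from a set of measure
   x keep the t-fraction on which q is smallest, i.e. a sublevel set {q < a} completed by part of the
   level set {q = a}; its cost is at most the fraction t of the cost of the whole set. Hence Gamma_star is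
   closed downwards in [0,1] and contains 0, so it contains [0, sup Gamma_star) and nothing above
   sup Gamma_star, which is the threshold. Only the integrability of q and 0 <= gamma <= 1 are used: the
   coefficient of h in Gamma_star may have any sign. *)

lemma set_integrable_const_real:
  assumes "A \<in> sets M" "emeasure M A \<noteq> \<infinity>"
  shows "set_integrable M A (\<lambda>_. c :: real)"
  using assms by (simp add: set_integrable_def integrable_indicator_iff less_top)

lemma set_integral_null_set:
  fixes f :: "'a \<Rightarrow> 'b::{banach, second_countable_topology}"
  assumes "A \<in> null_sets M"
  shows "(LINT x:A|M. f x) = 0"
proof -
  have "AE x in M. indicator A x *\<^sub>R f x = 0"
    using AE_not_in[OF assms] by eventually_elim simp
  then show ?thesis
    unfolding set_lebesgue_integral_def by (rule integral_eq_zero_AE)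
qed

lemma sets_Collect_set_borel_measurable:
  fixes f :: "'a \<Rightarrow> 'b::real_normed_vector"
  assumes "set_borel_measurable M \<rho> f" "\<rho> \<in> sets M" "B \<in> sets borel"
  shows "{x\<in>\<rho>. f x \<in> B} \<in> sets M"
proof -
  have "{x\<in>\<rho>. f x \<in> B} = f -` B \<inter> \<rho>"
    by auto
  then show ?thesis
    using set_borel_measurable_sets[OF assms(1,3,2)] by simp
qed

lemma set_integral_le_fraction_if_sublevel:
  fixes f :: "'a \<Rightarrow> real"
  assumes f: "set_integrable M \<rho> f" and \<rho>: "\<rho> \<in> sets M" "emeasure M \<rho> \<noteq> \<infinity>"
    and \<rho>': "\<rho>' \<in> sets M" "\<rho>' \<subseteq> \<rho>" "measure M \<rho>' = t * measure M \<rho>"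
    and t: "0 \<le> t" "t \<le> 1"
    and below: "\<And>x. x \<in> \<rho>' \<Longrightarrow> f x \<le> a" and above: "\<And>x. x \<in> \<rho> - \<rho>' \<Longrightarrow> a \<le> f x"
  shows "(LINT x:\<rho>'|M. f x) \<le> t * (LINT x:\<rho>|M. f x)"
proof -
  define R where "R = \<rho> - \<rho>'"
  have fin: "emeasure M X \<noteq> \<infinity>" if "X \<in> sets M" "X \<subseteq> \<rho>" for X
    using emeasure_mono[OF that(2) \<rho>(1)] \<rho>(2) by (auto simp: top_unique)
  have R: "R \<in> sets M" "measure M R = (1 - t) * measure M \<rho>"
    using \<rho> \<rho>' measure_Diff[OF \<rho>(2) \<rho>(1) \<rho>'(1,2)] by (auto simp: R_def algebra_simps)
  have "(LINT x:\<rho>'|M. f x) \<le> (LINT x:\<rho>'|M. a)"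
    using below \<rho>' fin by (intro set_integral_mono set_integrable_subset[OF f] set_integrable_const_real) auto
  also have "\<dots> = a * (t * measure M \<rho>)"
    using \<rho>' fin by (simp add: set_integral_const)
  finally have int_\<rho>': "(LINT x:\<rho>'|M. f x) \<le> a * (t * measure M \<rho>)" .
  have "a * ((1 - t) * measure M \<rho>) = (LINT x:R|M. a)"
    using R fin by (simp add: set_integral_const R_def)
  also have "\<dots> \<le> (LINT x:R|M. f x)"
    using above R fin by (intro set_integral_mono set_integrable_subset[OF f] set_integrable_const_real)
      (auto simp: R_def)
  finally have int_R: "a * ((1 - t) * measure M \<rho>) \<le> (LINT x:R|M. f x)" .
  have "\<rho> = \<rho>' \<union> R" "\<rho>' \<inter> R = {}"
    using \<rho>'(2) by (auto simp: R_def)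
  then have split: "(LINT x:\<rho>|M. f x) = (LINT x:\<rho>'|M. f x) + (LINT x:R|M. f x)"
    using R \<rho>' by (metis set_integral_Un set_integrable_subset[OF f] Diff_subset R_def)
  have "(1 - t) * (LINT x:\<rho>'|M. f x) \<le> t * (LINT x:R|M. f x)"
  proof -
    have "(1 - t) * (LINT x:\<rho>'|M. f x) \<le> (1 - t) * (a * (t * measure M \<rho>))"
      using int_\<rho>' t by (intro mult_left_mono) auto
    also have "\<dots> = t * (a * ((1 - t) * measure M \<rho>))"
      by (simp add: algebra_simps)
    also have "\<dots> \<le> t * (LINT x:R|M. f x)"
      using int_R t by (intro mult_left_mono) auto
    finally show ?thesis .
  qed
  then show ?thesis
    unfolding split by (simp add: algebra_simps)
qed

lemma (in finite_borel_measure) cdf_quantile: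
  assumes "0 < s" "s < measure M UNIV"
  obtains a where "measure M {..<a} \<le> s" "s \<le> cdf M a"
proof -
  define T where "T = {a. s \<le> cdf M a}"
  have "eventually (\<lambda>a. s < cdf M a) at_top"
    using order_tendstoD(1)[OF cdf_lim_at_top] assms(2) by (simp add: borel_UNIV)
  then obtain a1 where "a1 \<in> T"
    unfolding T_def eventually_at_top_linorder by (metis less_imp_le mem_Collect_eq order_refl)
  then have T_ne: "T \<noteq> {}" by blast
  have "eventually (\<lambda>a. cdf M a < s) at_bot"
    using order_tendstoD(2)[OF cdf_lim_at_bot] assms(1) .
  then obtain a0 where a0: "\<And>a. a \<le> a0 \<Longrightarrow> cdf M a < s"
    unfolding eventually_at_bot_linorder by blast
  have T_bdd: "bdd_below T"
  proof (rule bdd_belowI)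
    fix b assume "b \<in> T"
    then show "a0 \<le> b" using a0[of b] by (cases "b \<le> a0") (auto simp: T_def)
  qed
  define a where "a = Inf T"
  have "eventually (\<lambda>b. s \<le> cdf M b) (at_right a)"
  proof (rule eventually_at_rightI[of a "a + 1"])
    fix b assume "b \<in> {a<..<a + 1}"
    then obtain a' where "a' \<in> T" "a' < b"
      using cInf_less_iff[OF T_ne T_bdd] by (auto simp: a_def)
    then show "s \<le> cdf M b" using cdf_nondecreasing[of a' b] by (simp add: T_def)
  qed simp
  then have "s \<le> cdf M a"
    using cdf_is_right_cont[of a] by (intro tendsto_lowerbound) (auto simp: continuous_within)
  moreover have "eventually (\<lambda>b. cdf M b \<le> s) (at_left a)"
  proof (rule eventually_at_leftI[of "a - 1"])
    fix b assume "b \<in> {a - 1<..<a}"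
    then have "b \<notin> T" using cInf_lower[OF _ T_bdd] by (force simp: a_def)
    then show "cdf M b \<le> s" by (simp add: T_def)
  qed simp
  then have "measure M {..<a} \<le> s"
    using cdf_at_left[of a] by (intro tendsto_upperbound) auto
  ultimately show thesis using that by blast
qed

lemma exists_sublevel_threshold:
  fixes f :: "'a \<Rightarrow> real"
  assumes f: "set_borel_measurable M \<rho> f" and \<rho>: "\<rho> \<in> sets M" "emeasure M \<rho> \<noteq> \<infinity>"
    and s: "0 < s" "s < measure M \<rho>"
  obtains a where "measure M {x\<in>\<rho>. f x < a} \<le> s" "s \<le> measure M {x\<in>\<rho>. f x \<le> a}"
proof -
  let ?R = "restrict_space M \<rho>"
  define N where "N = distr ?R borel f"
  have f_R: "f \<in> borel_measurable ?R"
    using f \<rho>(1) by (simp add: set_borel_measurable_def borel_measurable_restrict_space_iff)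
  have "finite_measure ?R"
    using \<rho> by (intro finite_measureI) (simp add: emeasure_restrict_space space_restrict_space)
  then interpret N: finite_borel_measure N
    unfolding N_def finite_borel_measure_def finite_borel_measure_axioms_def
    by (simp add: finite_measure.finite_measure_distr f_R)
  have measure_N: "measure N B = measure M {x\<in>\<rho>. f x \<in> B}" if "B \<in> sets borel" for B
    using that f_R \<rho>(1) unfolding N_def
    by (subst measure_distr) (auto simp: space_restrict_space measure_restrict_space
        intro!: arg_cong[where f="measure M"])
  have "measure N UNIV = measure M \<rho>"
    using measure_N[of UNIV] by simp
  then obtain a where "measure N {..<a} \<le> s" "s \<le> cdf N a"
    using N.cdf_quantile s by auto
  then show thesis
    using that[of a] measure_N[of "{..<a}"] measure_N[of "{..a}"] by (simp add: cdf_def)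
qed

lemma lborel_subset_with_measure:
  fixes A :: "real set"
  assumes A: "A \<in> sets lborel" "bounded A" and d: "0 \<le> d" "d \<le> measure lborel A"
  obtains B where "B \<in> sets lborel" "B \<subseteq> A" "measure lborel B = d"
proof -
  obtain b where b: "\<And>x. x \<in> A \<Longrightarrow> \<bar>x\<bar> \<le> b" "0 < b"
    using A(2) by (auto simp: bounded_pos)
  define \<phi> where "\<phi> s = measure lborel (A \<inter> {..s})" for s
  have fin: "emeasure lborel X \<noteq> \<infinity>" if "X \<subseteq> A" for X
    using emeasure_bounded_finite[OF bounded_subset[OF A(2) that]] by simp
  have \<phi>_increment: "\<phi> s \<le> \<phi> s' \<and> \<phi> s' \<le> \<phi> s + (s' - s)" if "s \<le> s'" for s s'
  proof -
    have split: "A \<inter> {..s'} = (A \<inter> {..s}) \<union> (A \<inter> {s<..s'})"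
      using that by auto
    have "\<phi> s' = \<phi> s + measure lborel (A \<inter> {s<..s'})"
      unfolding \<phi>_def split by (rule measure_Union) (use A(1) fin in auto)
    moreover have "measure lborel (A \<inter> {s<..s'}) \<le> measure lborel {s<..s'}"
      using A(1) that by (intro measure_mono_fmeasurable) (auto simp: fmeasurable_def)
    ultimately show ?thesis
      using that by simp
  qed
  have "1-lipschitz_on {-b-1..b} \<phi>"
  proof (rule lipschitz_onI)
    fix x y :: real
    show "dist (\<phi> x) (\<phi> y) \<le> 1 * dist x y"
      using \<phi>_increment[of x y] \<phi>_increment[of y x] by (cases "x \<le> y") (auto simp: dist_real_def)
  qed simp
  moreover have "A \<inter> {..-b-1} = {}" "A \<inter> {..b} = A"
    using b(1) by (fastforce dest: b(1))+
  then have "\<phi> (-b-1) = 0" "\<phi> b = measure lborel A"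
    by (simp_all add: \<phi>_def)
  ultimately obtain s where "\<phi> s = d"
    using IVT'[of \<phi> "-b-1" d b] d b(2) lipschitz_on_continuous_on by auto
  then show thesis
    using that[of "A \<inter> {..s}"] A(1) by (auto simp: \<phi>_def)
qed

lemma lborel_subset_between_sublevels:
  fixes f :: "real \<Rightarrow> real"
  assumes f: "set_borel_measurable lborel \<rho> f" and \<rho>: "\<rho> \<in> sets lborel" "bounded \<rho>"
    and s: "measure lborel {x\<in>\<rho>. f x < a} \<le> s" "s \<le> measure lborel {x\<in>\<rho>. f x \<le> a}"
  obtains \<rho>' where "\<rho>' \<in> sets lborel" "{x\<in>\<rho>. f x < a} \<subseteq> \<rho>'" "\<rho>' \<subseteq> {x\<in>\<rho>. f x \<le> a}"
    "measure lborel \<rho>' = s"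
proof -
  define L where "L = {x\<in>\<rho>. f x < a}"
  define D where "D = {x\<in>\<rho>. f x = a}"
  have fin: "emeasure lborel X \<noteq> \<infinity>" if "X \<subseteq> \<rho>" for X
    using emeasure_bounded_finite[OF bounded_subset[OF \<rho>(2) that]] by simp
  have L: "L \<in> sets lborel" "L \<subseteq> \<rho>" and D: "D \<in> sets lborel" "D \<subseteq> \<rho>"
    using sets_Collect_set_borel_measurable[OF f \<rho>(1), of "{..<a}"]
      sets_Collect_set_borel_measurable[OF f \<rho>(1), of "{a}"] by (auto simp: L_def D_def)
  have "{x\<in>\<rho>. f x \<le> a} = L \<union> D" "L \<inter> D = {}"
    by (auto simp: L_def D_def)
  then have "measure lborel {x\<in>\<rho>. f x \<le> a} = measure lborel L + measure lborel D"
    using L D fin by (simp add: measure_Union)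
  then obtain B where B: "B \<in> sets lborel" "B \<subseteq> D" "measure lborel B = s - measure lborel L"
    using lborel_subset_with_measure[OF D(1) bounded_subset[OF \<rho>(2) D(2)], of "s - measure lborel L"]
      s by (auto simp: L_def)
  have "L \<inter> B = {}"
    using B(2) by (auto simp: L_def D_def)
  then have "measure lborel (L \<union> B) = s"
    using L B D fin by (simp add: measure_Union)
  moreover have "L \<union> B \<subseteq> {x\<in>\<rho>. f x \<le> a}"
    using B(2) by (auto simp: L_def D_def)
  ultimately show thesis
    using that[of "L \<union> B"] L(1) B(1) by (simp add: L_def)
qed

lemma exists_subset_fraction_set_integral_le:
  fixes f :: "real \<Rightarrow> real"
  assumes f: "set_integrable lborel \<rho> f" and \<rho>: "\<rho> \<in> sets lborel" "bounded \<rho>"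
    and t: "0 \<le> t" "t \<le> 1"
  obtains \<rho>' where "\<rho>' \<in> sets lborel" "\<rho>' \<subseteq> \<rho>" "measure lborel \<rho>' = t * measure lborel \<rho>"
    "(LINT x:\<rho>'|lborel. f x) \<le> t * (LINT x:\<rho>|lborel. f x)"
proof -
  define m where "m = measure lborel \<rho>"
  have fin: "emeasure lborel \<rho> \<noteq> \<infinity>"
    using emeasure_bounded_finite[OF \<rho>(2)] by simp
  have "0 \<le> m" by (simp add: m_def)
  then consider "t = 1" | "t * m = 0" | "0 < t * m" "t * m < m"
    using t by (cases "t = 1") (auto simp: less_le mult_less_cancel_right1)
  then show thesis
  proof cases
    case 1
    then show thesis using that[of \<rho>] \<rho>(1) by simp
  next
    case 2
    have "(LINT x:\<rho>|lborel. f x) = 0" if "m = 0"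
      using that \<rho>(1) fin
      by (intro set_integral_null_set) (auto simp: m_def emeasure_eq_ennreal_measure)
    moreover have "(LINT x:{}|lborel. f x) = 0"
      by (simp add: set_lebesgue_integral_def)
    ultimately show thesis using that[of "{}"] 2 by (auto simp: m_def)
  next
    case 3
    have f_meas: "set_borel_measurable lborel \<rho> f"
      using f by (simp add: set_integrable_def set_borel_measurable_def)
    obtain a where "measure lborel {x\<in>\<rho>. f x < a} \<le> t * m" "t * m \<le> measure lborel {x\<in>\<rho>. f x \<le> a}"
      using exists_sublevel_threshold[OF f_meas \<rho>(1) fin] 3 by (auto simp: m_def)
    then obtain \<rho>' where \<rho>': "\<rho>' \<in> sets lborel" "{x\<in>\<rho>. f x < a} \<subseteq> \<rho>'" "\<rho>' \<subseteq> {x\<in>\<rho>. f x \<le> a}"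
      "measure lborel \<rho>' = t * m"
      by (rule lborel_subset_between_sublevels[OF f_meas \<rho>])
    have "(LINT x:\<rho>'|lborel. f x) \<le> t * (LINT x:\<rho>|lborel. f x)"
      by (rule set_integral_le_fraction_if_sublevel[OF f \<rho>(1) fin, where a=a])
        (use \<rho>' t in \<open>auto simp: m_def\<close>)
    then show thesis
      using that[of \<rho>'] \<rho>' by (auto simp: m_def)
  qed
qed

definition repl_costs :: "(real \<Rightarrow> real) \<Rightarrow> real \<Rightarrow> real set" where
  "repl_costs q x = {(LINT z:\<rho>|lborel. q z) | \<rho>.
      \<rho> \<in> sets lborel \<and> \<rho> \<subseteq> {0..1} \<and> measure lborel \<rho> = x}"

lemma repl_cost_eq_Inf: "repl_cost q x = Inf (repl_costs q x)"
  unfolding repl_cost_def repl_costs_def ..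

lemma repl_costs_nonempty:
  assumes "0 \<le> x" "x \<le> 1"
  shows "repl_costs q x \<noteq> {}"
  using assms unfolding repl_costs_def by (auto intro!: exI[of _ "{0..x}"])

lemma bdd_below_repl_costs:
  assumes q: "set_integrable lborel {0..1} q"
  shows "bdd_below (repl_costs q x)"
proof (rule bdd_belowI)
  fix v assume "v \<in> repl_costs q x"
  then obtain \<rho> where \<rho>: "\<rho> \<in> sets lborel" "\<rho> \<subseteq> {0..1}" and v: "v = (LINT z:\<rho>|lborel. q z)"
    unfolding repl_costs_def by auto
  have "(LINT z|lborel. - (indicator {0..1} z * \<bar>q z\<bar>)) \<le> (LINT z:\<rho>|lborel. q z)"
    unfolding set_lebesgue_integral_def
    using set_integrable_subset[OF q \<rho>] set_integrable_abs[OF q] \<rho>(2)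
    by (intro integral_mono) (auto simp: set_integrable_def indicator_def)
  then show "- (LINT z:{0..1}|lborel. \<bar>q z\<bar>) \<le> v"
    using v by (simp add: set_lebesgue_integral_def)
qed

lemma repl_cost_zero: "repl_cost q 0 = 0"
proof -
  have "(LINT z:\<rho>|lborel. q z) = 0"
    if "\<rho> \<in> sets lborel" "\<rho> \<subseteq> {0..1}" "measure lborel \<rho> = 0" for \<rho>
  proof (rule set_integral_null_set)
    have "emeasure lborel \<rho> \<noteq> \<infinity>"
      using emeasure_bounded_finite[OF bounded_subset[OF bounded_closed_interval that(2)]] by simp
    then show "\<rho> \<in> null_sets lborel"
      using that by (auto simp: emeasure_eq_ennreal_measure)
  qed
  then have "repl_costs q 0 = {0}"
    unfolding repl_costs_def by (force intro!: exI[of _ "{}"] simp: set_lebesgue_integral_def)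
  then show ?thesis
    by (simp add: repl_cost_eq_Inf)
qed

lemma repl_cost_scale:
  assumes q: "set_integrable lborel {0..1} q" and x: "0 \<le> x" "x \<le> 1" and t: "0 \<le> t" "t \<le> 1"
  shows "repl_cost q (t * x) \<le> t * repl_cost q x"
proof -
  have scaled: "repl_cost q (t * x) \<le> t * v" if v_cost: "v \<in> repl_costs q x" for v
  proof -
    obtain \<rho> where \<rho>: "\<rho> \<in> sets lborel" "\<rho> \<subseteq> {0..1}" "measure lborel \<rho> = x"
      and v: "v = (LINT z:\<rho>|lborel. q z)"
      using v_cost unfolding repl_costs_def by auto
    obtain \<rho>' where \<rho>': "\<rho>' \<in> sets lborel" "\<rho>' \<subseteq> \<rho>" "measure lborel \<rho>' = t * x"
      and cost: "(LINT z:\<rho>'|lborel. q z) \<le> t * v"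
      using exists_subset_fraction_set_integral_le[OF set_integrable_subset[OF q \<rho>(1,2)] \<rho>(1)
          bounded_subset[OF bounded_closed_interval \<rho>(2)] t] \<rho>(3) v by metis
    have "(LINT z:\<rho>'|lborel. q z) \<in> repl_costs q (t * x)"
      using \<rho> \<rho>' unfolding repl_costs_def by auto
    then have "repl_cost q (t * x) \<le> (LINT z:\<rho>'|lborel. q z)"
      unfolding repl_cost_eq_Inf by (rule cInf_lower[OF _ bdd_below_repl_costs[OF q]])
    then show ?thesis using cost by simp
  qed
  show ?thesis
  proof (cases "t = 0")
    case True
    then show ?thesis
      using scaled repl_costs_nonempty[OF x] by fastforce
  next
    case False
    then have "repl_cost q (t * x) / t \<le> repl_cost q x"
      unfolding repl_cost_eq_Inf[of q x] using scaled t
      by (intro cInf_greatest[OF repl_costs_nonempty[OF x]]) (simp add: divide_le_eq mult.commute)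
    then show ?thesis
      using False t by (simp add: divide_le_eq mult.commute)
  qed
qed

lemma Gamma_star_down_closed:
  assumes q: "set_integrable lborel {0..1} q" and \<gamma>: "0 \<le> \<gamma>" "\<gamma> \<le> 1"
    and h: "h \<in> Gamma_star \<pi> \<epsilon> g \<gamma> q" and h': "0 \<le> h'" "h' \<le> h"
  shows "h' \<in> Gamma_star \<pi> \<epsilon> g \<gamma> q"
proof (cases "h = 0")
  case True
  then show ?thesis using h h' by simp
next
  case False
  define c where "c = ((1 - \<pi>) * (1 - \<epsilon>) - \<pi> * \<epsilon> * g) / ((1 - \<pi>) * \<epsilon>)"
  have h01: "0 < h" "h \<le> 1" and cost: "repl_cost q (\<gamma> * h) \<le> c * h"
    using h h' False by (auto simp: Gamma_star_def c_def)
  define t where "t = h' / h"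
  have t: "0 \<le> t" "t \<le> 1" "\<gamma> * h' = t * (\<gamma> * h)" "t * h = h'"
    using h' h01 by (auto simp: t_def)
  have "repl_cost q (\<gamma> * h') \<le> t * repl_cost q (\<gamma> * h)"
    unfolding t(3) using \<gamma> h01 by (intro repl_cost_scale[OF q _ _ t(1,2)]) (auto intro: mult_le_one)
  also have "\<dots> \<le> t * (c * h)"
    using cost t(1) by (rule mult_left_mono)
  finally have "repl_cost q (\<gamma> * h') \<le> c * h'"
    using t(4) by (simp add: algebra_simps)
  then show ?thesis
    using h' h01 by (simp add: Gamma_star_def c_def)
qed

lemma down_closed_threshold:
  fixes S :: "real set"
  assumes S: "0 \<in> S" "S \<subseteq> {0..1}"
    and down: "\<And>h h'. h \<in> S \<Longrightarrow> 0 \<le> h' \<Longrightarrow> h' \<le> h \<Longrightarrow> h' \<in> S"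
  shows "Sup S \<in> {0..1}" "{0..<Sup S} \<subseteq> S" "S \<inter> {Sup S<..} = {}"
proof -
  have bdd: "bdd_above S"
    by (rule bdd_above_mono[OF bdd_above_Icc S(2)])
  show "Sup S \<in> {0..1}"
    using S cSup_upper[OF S(1) bdd] by (auto intro!: cSup_least)
  show "{0..<Sup S} \<subseteq> S"
  proof
    fix h assume h: "h \<in> {0..<Sup S}"
    then obtain h' where "h' \<in> S" "h < h'"
      using less_cSup_iff[OF _ bdd] S(1) by auto
    then show "h \<in> S"
      using down h by auto
  qed
  show "S \<inter> {Sup S<..} = {}"
    using cSup_upper[OF _ bdd] by fastforce
qed

theorem proposition1:
  fixes \<pi> \<epsilon> g \<gamma> :: real and q :: "real \<Rightarrow> real" and \<gamma>s :: "real \<Rightarrow> real"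
  assumes "0 \<le> \<pi>" "\<pi> < 1"
    and "0 < \<epsilon>" "\<epsilon> \<le> 1/2"
    and "0 < g"
    and "0 \<le> \<gamma>" "\<gamma> \<le> 1"
    and "set_integrable lborel {0..1} q"
    and "\<forall>h\<in>{0..1}. \<gamma>s h = (if h \<in> Gamma_star \<pi> \<epsilon> g \<gamma> q then \<gamma> else 0)"
  shows "\<exists>ht\<in>{0..1}.
           (\<forall>h\<in>{0..<ht}. \<gamma>s h = \<gamma>) \<and>
           (\<forall>h\<in>{ht<..1}. \<gamma>s h = 0) \<and>
           \<gamma>s ht \<in> {0, \<gamma>} \<and>
           (\<gamma>s ht = \<gamma> \<longrightarrow>
              ((1 - \<pi>) * (1 - \<epsilon>) - \<pi> * \<epsilon> * g) / ((1 - \<pi>) * \<epsilon>) * ht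
                \<ge> repl_cost q (\<gamma> * ht))"
proof (cases "\<gamma> = 0")
  case True
  \<comment> \<open>Now \<open>\<gamma>s ht = \<gamma>\<close> always holds and \<open>Sup Gamma_star\<close> may lie outside \<open>Gamma_star\<close>: take \<open>ht = 0\<close>.\<close>
  then show ?thesis
    using assms(9) by (intro bexI[of _ 0]) (auto simp: repl_cost_zero)
next
  case False
  define G where "G = Gamma_star \<pi> \<epsilon> g \<gamma> q"
  have G: "0 \<in> G" "G \<subseteq> {0..1}"
    by (auto simp: G_def Gamma_star_def repl_cost_zero)
  define ht where "ht = Sup G"
  have ht: "ht \<in> {0..1}" "{0..<ht} \<subseteq> G" "G \<inter> {ht<..} = {}"
    unfolding ht_def using down_closed_threshold[OF G] Gamma_star_down_closed[OF assms(8,6,7)]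
    by (simp_all add: G_def)
  have \<gamma>s_G: "\<gamma>s h = (if h \<in> G then \<gamma> else 0)" if "h \<in> {0..1}" for h
    using assms(9) that by (simp add: G_def)
  show ?thesis
  proof (intro bexI[OF _ ht(1)] conjI ballI impI)
    show "\<gamma>s h = \<gamma>" if "h \<in> {0..<ht}" for h
      using that ht \<gamma>s_G by auto
    show "\<gamma>s h = 0" if "h \<in> {ht<..1}" for h
      using that ht \<gamma>s_G by auto
    show "\<gamma>s ht \<in> {0, \<gamma>}"
      using ht(1) \<gamma>s_G by simp
    assume "\<gamma>s ht = \<gamma>"
    then have "ht \<in> G"
      using ht(1) \<gamma>s_G False by (auto split: if_splits)
    then show "((1 - \<pi>) * (1 - \<epsilon>) - \<pi> * \<epsilon> * g) / ((1 - \<pi>) * \<epsilon>) * ht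
        \<ge> repl_cost q (\<gamma> * ht)"
      by (simp add: G_def Gamma_star_def)
  qed
qed

end
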